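(* Consider control protocol (C4) with $r_1=\cdots=r_n\ge\frac1{n-1}$. Then for any constants $z^*\in[0,1]$ and $\alpha^*>0$, the set $S_{z^*,\alpha^*}=\{(x_1,\dots,x_n)\in[0,1]^n:\max_{i\in\mathcal V}|x_i-z^*|<\alpha^*\}$ is finite-time robustly reachable from $[0,1]^n$.
   Context: Fix $n\ge3$, $\mathcal V=\{1,\dots,n\}$, confidence thresholds $r_i\in(0,1]$, $\eta>0$. States $x(t)\in[0,1]^n$. Neighbor set $\mathcal N_i(t)=\{j:|x_j(t)-x_i(t)|\le r_i\}$ (contains $i$), $\Pi_{[0,1]}(y)=\min\{1,\max\{0,y\}\}$. Control protocol (C4): $x_i(t+1)=\Pi_{[0,1]}\big(|\mathcal N_i(t)|^{-1}[x_i(t)+\sum_{j\in\mathcal N_i(t)\setminus\{i\}}(x_j(t)+u_{ji}(t)+b_{ji}(t))]\big)$, where for $j\in\mathcal N_i(t)\setminus\{i\}$: $\delta_i(t)\in(0,\eta)$ is a chosen parameter, $u_{ji}(t)\in[-\eta+\delta_i(t),\eta-\delta_i(t)]$ a chosen control input, $b_{ji}(t)\in[-\delta_i(t),\delta_i(t)]$ an arbitrary uncertainty; the choices may depend on $x(0),\dots,x(t)$. A set $S\subseteq[0,1]^n$ is finite-time robustly reachable from $[0,1]^n$ under the protocol if there exist constants $T>0$ and $\varepsilon\in(0,\eta)$ such that for every $x(0)\in[0,1]^n$, either $x(0)\in S$, or one can choose $\delta_i(t)\in[\varepsilon,\eta)$ and $u_{ji}(t)\in[-\eta+\delta_i(t),\eta-\delta_i(t)]$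 ($0\le t<T$, $i\in\mathcal V$, $j\in\mathcal N_i(t)\setminus\{i\}$) guaranteeing that for arbitrary $b_{ji}(t)\in[-\delta_i(t),\delta_i(t)]$ there is $t\in[1,T]$ with $x(t)\in S$. *)

theory Defs
  imports Complex_Main
begin

text \<open>Agents are indexed by 0..n-1; a state is a function nat => real
  (only the values at indices < n matter).\<close>

definition proj01 :: "real \<Rightarrow> real" where
  "proj01 y = min 1 (max 0 y)"

definition nbrs :: "nat \<Rightarrow> (nat \<Rightarrow> real) \<Rightarrow> (nat \<Rightarrow> real) \<Rightarrow> nat \<Rightarrow> nat set" where
  "nbrs n r x i = {j. j < n \<and> \<bar>x j - x i\<bar> \<le> r i}"

text \<open>One step of protocol (C4); u j i and b j i are u_{ji}(t), b_{ji}(t).\<close>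
definition c4_step :: "nat \<Rightarrow> (nat \<Rightarrow> real) \<Rightarrow> (nat \<Rightarrow> real)
    \<Rightarrow> (nat \<Rightarrow> nat \<Rightarrow> real) \<Rightarrow> (nat \<Rightarrow> nat \<Rightarrow> real) \<Rightarrow> (nat \<Rightarrow> real)" where
  "c4_step n r x u b = (\<lambda>i. proj01
     ((x i + (\<Sum>j\<in>nbrs n r x i - {i}. x j + u j i + b j i)) / real (card (nbrs n r x i))))"

text \<open>History of states x(0),...,x(t) as a list of length t+1, under
  feedback choices U (control inputs, depending on the history) and
  uncertainties B t j i.\<close>
fun c4_hist :: "nat \<Rightarrow> (nat \<Rightarrow> real) \<Rightarrow> (nat \<Rightarrow> real)
    \<Rightarrow> ((nat \<Rightarrow> real) list \<Rightarrow> nat \<Rightarrow> nat \<Rightarrow> real)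
    \<Rightarrow> (nat \<Rightarrow> nat \<Rightarrow> nat \<Rightarrow> real) \<Rightarrow> nat \<Rightarrow> (nat \<Rightarrow> real) list" where
  "c4_hist n r x0 U B 0 = [x0]"
| "c4_hist n r x0 U B (Suc t) =
     (let h = c4_hist n r x0 U B t in h @ [c4_step n r (last h) (U h) (B t)])"

definition c4_traj :: "nat \<Rightarrow> (nat \<Rightarrow> real) \<Rightarrow> (nat \<Rightarrow> real)
    \<Rightarrow> ((nat \<Rightarrow> real) list \<Rightarrow> nat \<Rightarrow> nat \<Rightarrow> real)
    \<Rightarrow> (nat \<Rightarrow> nat \<Rightarrow> nat \<Rightarrow> real) \<Rightarrow> nat \<Rightarrow> (nat \<Rightarrow> real)" where
  "c4_traj n r x0 U B t = last (c4_hist n r x0 U B t)"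

definition unit_cube :: "nat \<Rightarrow> (nat \<Rightarrow> real) set" where
  "unit_cube n = {x. \<forall>i<n. 0 \<le> x i \<and> x i \<le> 1}"

text \<open>Finite-time robust reachability of S from [0,1]^n under (C4).
  D h i = delta_i(t), U h j i = u_{ji}(t), where h = [x(0),...,x(t)].\<close>
definition robustly_reachable_C4 ::
    "nat \<Rightarrow> (nat \<Rightarrow> real) \<Rightarrow> real \<Rightarrow> (nat \<Rightarrow> real) set \<Rightarrow> bool" where
  "robustly_reachable_C4 n r \<eta> S \<longleftrightarrow>
    (\<exists>(T::nat) \<epsilon>::real. T > 0 \<and> 0 < \<epsilon> \<and> \<epsilon> < \<eta> \<and>
      (\<forall>x0 \<in> unit_cube n. x0 \<in> S \<or>
        (\<exists>D :: (nat \<Rightarrow> real) list \<Rightarrow> nat \<Rightarrow> real.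
         \<exists>U :: (nat \<Rightarrow> real) list \<Rightarrow> nat \<Rightarrow> nat \<Rightarrow> real.
           (\<forall>h i. i < n \<longrightarrow> \<epsilon> \<le> D h i \<and> D h i < \<eta>) \<and>
           (\<forall>h i j. i < n \<longrightarrow> j < n \<longrightarrow> j \<noteq> i \<longrightarrow>
               - \<eta> + D h i \<le> U h j i \<and> U h j i \<le> \<eta> - D h i) \<and>
           (\<forall>B :: nat \<Rightarrow> nat \<Rightarrow> nat \<Rightarrow> real.
              (\<forall>t<T. \<forall>i<n. \<forall>j<n. j \<noteq> i \<longrightarrow>
                  \<bar>B t j i\<bar> \<le> D (c4_hist n r x0 U B t) i) \<longrightarrow>
              (\<exists>t\<in>{1..T}. c4_traj n r x0 U B t \<in> S)))))"

end

theory Submission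
  imports Defs
begin

text \<open>Isolated agents (no neighbour within \<open>r\<close>) cannot move, whereas an agent with \<open>k \<ge> 2\<close>
  neighbours is shifted by \<open>(k - 1)/k\<close> times the common input, i.e. by at least half of it; and
  since \<open>r \<ge> 1/(n - 1)\<close>, by pigeonhole some agent is never isolated. The feedback pushes all
  non-isolated agents up until they form a tight cluster more than \<open>r\<close> above all isolated agents,
  then lowers the cluster until the highest isolated agent joins it, after which the enlarged group
  is pushed up again, to at least \<open>\<gamma>\<close> above that agent. Agents left isolated below this floor
  stay frozen, so a double induction on the number of \<open>\<gamma>\<close>-levels left and on the number of
  isolated agents above the frozen ones bounds the number of rounds, after which the confidence
  graph is complete; from then on an input computed from the mean drives every agent to within
  \<open>\<epsilon>\<close> of \<open>z\<close>.\<close>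

lemma proj01_bounds: "0 \<le> proj01 y" "proj01 y \<le> 1"
  by (auto simp: proj01_def)

lemma proj01_eq_self: "0 \<le> y \<Longrightarrow> y \<le> 1 \<Longrightarrow> proj01 y = y"
  by (auto simp: proj01_def)

lemma abs_proj01_diff_le: "\<bar>proj01 y - proj01 y'\<bar> \<le> \<bar>y - y'\<bar>"
  by (auto simp: proj01_def min_def max_def)

lemma min_one_le_proj01: "min 1 y \<le> proj01 y"
  by (auto simp: proj01_def)

lemma proj01_le_max_zero: "proj01 y \<le> max 0 y"
  by (auto simp: proj01_def)

lemma abs_proj01_diff_le_unit: "0 \<le> z \<Longrightarrow> z \<le> 1 \<Longrightarrow> \<bar>proj01 y - z\<bar> \<le> \<bar>y - z\<bar>"
  using abs_proj01_diff_le[of y z] proj01_eq_self[of z] by simp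

lemma c4_step_common_input_bounds:
  fixes x :: "nat \<Rightarrow> real"
  assumes i: "i < n" and r0: "0 \<le> r i"
    and u: "\<And>j. j \<in> nbrs n r x i - {i} \<Longrightarrow> u j i = w"
    and b: "\<And>j. j \<in> nbrs n r x i - {i} \<Longrightarrow> \<bar>b j i\<bar> \<le> e"
  defines "N \<equiv> nbrs n r x i"
  obtains y where "c4_step n r x u b i = proj01 y"
    and "(\<Sum>j\<in>N. x j) + (real (card N) - 1) * (w - e) \<le> real (card N) * y"
    and "real (card N) * y \<le> (\<Sum>j\<in>N. x j) + (real (card N) - 1) * (w + e)"
proof -
  have fin: "finite N" unfolding N_def nbrs_def by auto
  have iin: "i \<in> N" using i r0 unfolding N_def nbrs_def by auto
  have card_pos: "card N > 0" using fin iin card_gt_0_iff by blast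
  have card_rest: "real (card (N - {i})) = real (card N) - 1"
    using fin iin card_pos by (simp add: card_Diff_singleton of_nat_diff)
  define y where "y = (x i + (\<Sum>j\<in>N - {i}. x j + u j i + b j i)) / real (card N)"
  have step: "c4_step n r x u b i = proj01 y" unfolding c4_step_def y_def N_def by simp
  have sum_split: "(\<Sum>j\<in>N. x j) = x i + (\<Sum>j\<in>N - {i}. x j)"
    using fin iin by (simp add: sum.remove)
  have sum_input: "(\<Sum>j\<in>N - {i}. x j + u j i + b j i) = (\<Sum>j\<in>N - {i}. x j) + (\<Sum>j\<in>N - {i}. w + b j i)"
    using u by (simp add: sum.distrib add.assoc N_def)
  have lo: "(\<Sum>j\<in>N - {i}. w - e) \<le> (\<Sum>j\<in>N - {i}. w + b j i)"
    by (rule sum_mono) (use b in \<open>force simp: N_def\<close>)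
  have hi: "(\<Sum>j\<in>N - {i}. w + b j i) \<le> (\<Sum>j\<in>N - {i}. w + e)"
    by (rule sum_mono) (use b in \<open>force simp: N_def\<close>)
  have ky: "real (card N) * y = x i + (\<Sum>j\<in>N - {i}. x j + u j i + b j i)"
    unfolding y_def using card_pos by simp
  show ?thesis
    by (rule that[OF step]) (use sum_split sum_input lo hi card_rest ky in \<open>simp_all add: algebra_simps\<close>)
qed

lemma robustly_reachable_C4_by_feedback:
  fixes f :: "(nat \<Rightarrow> real) \<Rightarrow> nat \<Rightarrow> nat \<Rightarrow> real" and \<epsilon> :: real
  assumes T: "T > 0" and \<epsilon>: "0 < \<epsilon>" "\<epsilon> < \<eta>"
    and f: "\<And>x j i. - \<eta> + \<epsilon> \<le> f x j i \<and> f x j i \<le> \<eta> - \<epsilon>"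
    and reach: "\<And>y. y 0 \<in> unit_cube n \<Longrightarrow>
       (\<And>t. t < T \<Longrightarrow> \<exists>b. (\<forall>i<n. \<forall>j<n. j \<noteq> i \<longrightarrow> \<bar>b j i\<bar> \<le> \<epsilon>) \<and>
                           y (Suc t) = c4_step n r (y t) (f (y t)) b) \<Longrightarrow>
       \<exists>t\<le>T. y t \<in> S"
  shows "robustly_reachable_C4 n r \<eta> S"
  unfolding robustly_reachable_C4_def
proof (intro exI conjI ballI)
  fix x0 assume x0: "x0 \<in> unit_cube n"
  define U where "U h = f (last h)" for h :: "(nat \<Rightarrow> real) list"
  have main: "\<exists>t\<in>{1..T}. c4_traj n r x0 U B t \<in> S"
    if B: "\<forall>t<T. \<forall>i<n. \<forall>j<n. j \<noteq> i \<longrightarrow> \<bar>B t j i\<bar> \<le> \<epsilon>" and x0S: "x0 \<notin> S" for B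
  proof -
    define y where "y = c4_traj n r x0 U B"
    have "y 0 = x0" by (simp add: y_def c4_traj_def)
    moreover have "y (Suc t) = c4_step n r (y t) (f (y t)) (B t)" for t
      by (simp add: y_def c4_traj_def Let_def U_def)
    ultimately obtain t where "t \<le> T" "y t \<in> S"
      using reach[of y] x0 B by blast
    moreover have "t \<noteq> 0" using \<open>y t \<in> S\<close> \<open>y 0 = x0\<close> x0S by (cases t) auto
    ultimately show ?thesis by (auto simp: y_def)
  qed
  show "x0 \<in> S \<or> (\<exists>D U.
          (\<forall>h i. i < n \<longrightarrow> \<epsilon> \<le> D h i \<and> D h i < \<eta>) \<and>
          (\<forall>h i j. i < n \<longrightarrow> j < n \<longrightarrow> j \<noteq> i \<longrightarrow> - \<eta> + D h i \<le> U h j i \<and> U h j i \<le> \<eta> - D h i) \<and>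
          (\<forall>B. (\<forall>t<T. \<forall>i<n. \<forall>j<n. j \<noteq> i \<longrightarrow> \<bar>B t j i\<bar> \<le> D (c4_hist n r x0 U B t) i) \<longrightarrow>
               (\<exists>t\<in>{1..T}. c4_traj n r x0 U B t \<in> S)))"
  proof (cases "x0 \<in> S")
    case False
    show ?thesis
      by (rule disjI2, rule exI[of _ "\<lambda>_ _. \<epsilon>"], rule exI[of _ U]) (use f \<epsilon> False main in \<open>auto simp: U_def\<close>)
  qed simp
qed (use T \<epsilon> in auto)

subsection \<open>The steering feedback\<close>

lemma close_pair_in_unit_interval:
  fixes x :: "nat \<Rightarrow> real"
  assumes n: "n \<ge> 2" and x: "\<forall>i<n. 0 \<le> x i \<and> x i \<le> 1"
  obtains i j where "i < n" "j < n" "i \<noteq> j" "\<bar>x i - x j\<bar> \<le> 1 / (real n - 1)"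
proof -
  have m: "real n - 1 > 0" using n by simp
  define box where "box i = min (n - 2) (nat \<lfloor>x i * (real n - 1)\<rfloor>)" for i
  have box_bounds: "real (box i) \<le> x i * (real n - 1) \<and> x i * (real n - 1) \<le> real (box i) + 1"
    if "i < n" for i
  proof -
    have t0: "0 \<le> x i * (real n - 1)" and t1: "x i * (real n - 1) \<le> real n - 1"
      using x that m by (auto simp: mult_le_cancel_right1)
    show ?thesis
    proof (cases "nat \<lfloor>x i * (real n - 1)\<rfloor> \<le> n - 2")
      case True
      thus ?thesis using t0 by (simp add: box_def of_int_floor_le)
    next
      case False
      hence "real (box i) = real n - 2" "of_int \<lfloor>x i * (real n - 1)\<rfloor> > real n - 2"
        using t0 n by (auto simp: box_def of_nat_diff)
      moreover have "of_int \<lfloor>x i * (real n - 1)\<rfloor> \<le> x i * (real n - 1)" by simp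
      ultimately show ?thesis using t1 by linarith
    qed
  qed
  txt \<open>Pigeonhole: \<open>n\<close> agents, \<open>n - 1\<close> boxes of width \<open>1/(n - 1)\<close>.\<close>
  have "box ` {..<n} \<subseteq> {..<n-1}" using n by (auto simp: box_def)
  hence "card (box ` {..<n}) \<le> n - 1" by (metis card_lessThan card_mono finite_lessThan)
  hence "\<not> inj_on box {..<n}" using n card_image[of box "{..<n}"] by auto
  then obtain i j where ij: "i < n" "j < n" "i \<noteq> j" "box i = box j" by (auto simp: inj_on_def)
  have "\<bar>(x i - x j) * (real n - 1)\<bar> \<le> 1"
    using box_bounds[OF ij(1)] box_bounds[OF ij(2)] ij(4) unfolding abs_le_iff by (simp add: algebra_simps)
  hence "\<bar>x i - x j\<bar> * (real n - 1) \<le> 1" using m by (simp add: abs_mult)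
  hence "\<bar>x i - x j\<bar> \<le> 1 / (real n - 1)" using m by (simp add: field_simps)
  thus ?thesis using that ij by blast
qed

locale c4_steering =
  fixes n :: nat and r \<eta> z \<alpha> :: real
  assumes n_ge_3: "n \<ge> 3" and eta_pos: "\<eta> > 0" and r_ge: "r \<ge> 1 / (real n - 1)"
    and z_ge_0: "0 \<le> z" and z_le_1: "z \<le> 1" and alpha_pos: "\<alpha> > 0"
begin

definition "push = min \<eta> r / 2"
definition "\<gamma> = push / 4"
definition "\<epsilon> = min (push / 8) (\<alpha> / 2)"

definition nbh :: "(nat \<Rightarrow> real) \<Rightarrow> nat \<Rightarrow> nat set" where
  "nbh x i = nbrs n (\<lambda>_. r) x i"

definition isolated :: "(nat \<Rightarrow> real) \<Rightarrow> nat \<Rightarrow> bool" where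
  "isolated x i \<longleftrightarrow> (\<forall>j<n. j \<noteq> i \<longrightarrow> r < \<bar>x j - x i\<bar>)"

definition isolated_agents :: "(nat \<Rightarrow> real) \<Rightarrow> nat set" where
  "isolated_agents x = {i. i < n \<and> isolated x i}"

definition nonisolated_agents :: "(nat \<Rightarrow> real) \<Rightarrow> nat set" where
  "nonisolated_agents x = {i. i < n \<and> \<not> isolated x i}"

definition fully_connected :: "(nat \<Rightarrow> real) \<Rightarrow> bool" where
  "fully_connected x \<longleftrightarrow> (\<forall>i<n. \<forall>j<n. \<bar>x i - x j\<bar> \<le> r)"

definition cluster_on_top :: "(nat \<Rightarrow> real) \<Rightarrow> bool" where
  "cluster_on_top x \<longleftrightarrow>
     (\<forall>i\<in>nonisolated_agents x. \<forall>j\<in>nonisolated_agents x. \<bar>x i - x j\<bar> \<le> 2 * \<epsilon>) \<and>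
     (\<forall>a\<in>isolated_agents x. \<forall>j\<in>nonisolated_agents x. x a < x j - r)"

definition mean :: "(nat \<Rightarrow> real) \<Rightarrow> real" where
  "mean x = (\<Sum>j<n. x j) / real n"

text \<open>The input that would move every agent onto \<open>z\<close> in a complete confidence graph, clipped
  to \<open>[-push, push]\<close>.\<close>
definition centering_input :: "(nat \<Rightarrow> real) \<Rightarrow> real" where
  "centering_input x = max (- push) (min push ((z - mean x) * real n / (real n - 1)))"

definition feedback :: "(nat \<Rightarrow> real) \<Rightarrow> real" where
  "feedback x = (if fully_connected x then centering_input x
                 else if cluster_on_top x then - push else push)"

definition next_state :: "(nat \<Rightarrow> real) \<Rightarrow> (nat \<Rightarrow> real) \<Rightarrow> bool" where
  "next_state x x' \<longleftrightarrow> (\<exists>b. (\<forall>i<n. \<forall>j<n. j \<noteq> i \<longrightarrow> \<bar>b j i\<bar> \<le> \<epsilon>) \<and>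
                              x' = c4_step n (\<lambda>_. r) x (\<lambda>_ _. feedback x) b)"

lemma r_pos: "r > 0"
proof -
  have "1 / (real n - 1) > 0" using n_ge_3 by simp
  thus ?thesis using r_ge by linarith
qed

lemma push_pos: "push > 0"
  using eta_pos r_pos by (simp add: push_def)

lemma parameter_bounds:
  "0 < \<epsilon>" "\<epsilon> < \<alpha>" "\<epsilon> \<le> push / 8" "0 < \<gamma>" "\<gamma> \<le> (push - \<epsilon>) / 2"
  "2 * \<epsilon> \<le> r / 8" "\<gamma> \<le> r / 8" "push + \<epsilon> \<le> r * 9 / 16" "push \<le> \<eta> - \<epsilon>"
  using push_pos alpha_pos eta_pos r_pos
  by (auto simp: \<epsilon>_def \<gamma>_def push_def)

lemma feedback_bounds: "- push \<le> feedback x" "feedback x \<le> push"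
  using push_pos by (auto simp: feedback_def centering_input_def)

lemma finite_nbh: "finite (nbh x i)"
  by (auto simp: nbh_def nbrs_def)

lemma mem_nbh_iff: "j \<in> nbh x i \<longleftrightarrow> j < n \<and> \<bar>x j - x i\<bar> \<le> r"
  by (auto simp: nbh_def nbrs_def)

lemma nbh_isolated: "i < n \<Longrightarrow> isolated x i \<Longrightarrow> nbh x i = {i}"
  using r_pos by (auto simp: isolated_def mem_nbh_iff)

lemma nbh_nonisolated_agents:
  "j \<in> nonisolated_agents x \<Longrightarrow> l \<in> nbh x j \<Longrightarrow> l \<in> nonisolated_agents x"
  by (cases "l = j") (auto simp: nonisolated_agents_def mem_nbh_iff isolated_def not_less abs_minus_commute)

lemma isolated_mem_nbh: "j < n \<Longrightarrow> isolated x a \<Longrightarrow> a \<in> nbh x j \<Longrightarrow> a = j"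
  unfolding mem_nbh_iff isolated_def by (metis abs_minus_commute not_less)

lemma card_nbh_ge_1: "i < n \<Longrightarrow> real (card (nbh x i)) \<ge> 1"
  using finite_nbh[of x i] r_pos card_gt_0_iff[of "nbh x i"] by (force simp: mem_nbh_iff)

lemma card_nbh_ge_2: "i < n \<Longrightarrow> \<not> isolated x i \<Longrightarrow> real (card (nbh x i)) \<ge> 2"
proof -
  assume i: "i < n" and "\<not> isolated x i"
  then obtain j where j: "j < n" "j \<noteq> i" "\<bar>x j - x i\<bar> \<le> r"
    by (auto simp: isolated_def not_less)
  have "{i, j} \<subseteq> nbh x i" using i j r_pos by (auto simp: mem_nbh_iff)
  hence "card {i, j} \<le> card (nbh x i)" using finite_nbh by (rule card_mono[rotated])
  thus ?thesis using j by simp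
qed

lemma nonisolated_agents_nonempty:
  assumes "x \<in> unit_cube n" shows "nonisolated_agents x \<noteq> {}"
proof -
  obtain i j where "i < n" "j < n" "i \<noteq> j" "\<bar>x i - x j\<bar> \<le> 1 / (real n - 1)"
    using close_pair_in_unit_interval[of n] n_ge_3 assms by (auto simp: unit_cube_def)
  hence "i \<in> nonisolated_agents x" using r_ge by (force simp: nonisolated_agents_def isolated_def)
  thus ?thesis by blast
qed

lemma next_state_unit_cube: "next_state x x' \<Longrightarrow> x' \<in> unit_cube n"
  by (auto simp: next_state_def unit_cube_def c4_step_def proj01_bounds)

lemma next_state_isolated:
  assumes "next_state x x'" "x \<in> unit_cube n" "i < n" "isolated x i"
  shows "x' i = x i"
proof -
  have "nbrs n (\<lambda>_. r) x i = {i}" using nbh_isolated[OF assms(3,4)] by (simp add: nbh_def)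
  thus ?thesis using assms by (auto simp: next_state_def c4_step_def proj01_eq_self unit_cube_def)
qed

lemma next_state_bounds:
  assumes "next_state x x'" "i < n"
  obtains y where "x' i = proj01 y"
    and "(\<Sum>j\<in>nbh x i. x j) + (real (card (nbh x i)) - 1) * (feedback x - \<epsilon>) \<le> real (card (nbh x i)) * y"
    and "real (card (nbh x i)) * y \<le> (\<Sum>j\<in>nbh x i. x j) + (real (card (nbh x i)) - 1) * (feedback x + \<epsilon>)"
proof -
  obtain b where b: "\<forall>i<n. \<forall>j<n. j \<noteq> i \<longrightarrow> \<bar>b j i\<bar> \<le> \<epsilon>"
    and x': "x' = c4_step n (\<lambda>_. r) x (\<lambda>_ _. feedback x) b"
    using assms(1) by (auto simp: next_state_def)
  show ?thesis
    by (rule c4_step_common_input_bounds[of i n "\<lambda>_. r" x "\<lambda>_ _. feedback x" "feedback x" b \<epsilon>])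
       (use assms(2) b x' r_pos that in \<open>auto simp: nbrs_def nbh_def\<close>)
qed

lemma next_state_ge_half_input:
  assumes "next_state x x'" "i < n" "\<not> isolated x i" "feedback x \<ge> \<epsilon>"
    and "\<And>j. j \<in> nbh x i \<Longrightarrow> c \<le> x j"
  shows "x' i \<ge> min 1 (c + (feedback x - \<epsilon>) / 2)"
proof -
  obtain y where y: "x' i = proj01 y"
    and lo: "(\<Sum>j\<in>nbh x i. x j) + (real (card (nbh x i)) - 1) * (feedback x - \<epsilon>) \<le> real (card (nbh x i)) * y"
    using next_state_bounds[OF assms(1,2)] by blast
  define k where "k = real (card (nbh x i))"
  have k2: "k \<ge> 2" using card_nbh_ge_2[OF assms(2,3)] by (simp add: k_def)
  have "k * c \<le> (\<Sum>j\<in>nbh x i. x j)"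
    using sum_mono[of "nbh x i" "\<lambda>_. c" x] assms(5) by (simp add: k_def)
  moreover have "k * ((feedback x - \<epsilon>) / 2) \<le> (k - 1) * (feedback x - \<epsilon>)"
    using mult_right_mono[of "k / 2" "k - 1" "feedback x - \<epsilon>"] k2 assms(4) by simp
  ultimately have "k * (c + (feedback x - \<epsilon>) / 2) \<le> k * y"
    using lo unfolding k_def[symmetric] by (simp add: algebra_simps)
  hence "c + (feedback x - \<epsilon>) / 2 \<le> y" using k2 by simp
  thus ?thesis using y min_one_le_proj01[of y] by linarith
qed

lemma next_state_le_half_input:
  assumes "next_state x x'" "i < n" "\<not> isolated x i" "feedback x \<le> - \<epsilon>"
    and "\<And>j. j \<in> nbh x i \<Longrightarrow> x j \<le> c"
  shows "x' i \<le> max 0 (c + (feedback x + \<epsilon>) / 2)"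
proof -
  obtain y where y: "x' i = proj01 y"
    and hi: "real (card (nbh x i)) * y \<le> (\<Sum>j\<in>nbh x i. x j) + (real (card (nbh x i)) - 1) * (feedback x + \<epsilon>)"
    using next_state_bounds[OF assms(1,2)] by blast
  define k where "k = real (card (nbh x i))"
  have k2: "k \<ge> 2" using card_nbh_ge_2[OF assms(2,3)] by (simp add: k_def)
  have "(\<Sum>j\<in>nbh x i. x j) \<le> k * c"
    using sum_mono[of "nbh x i" x "\<lambda>_. c"] assms(5) by (simp add: k_def)
  moreover have "(k - 1) * (feedback x + \<epsilon>) \<le> k * ((feedback x + \<epsilon>) / 2)"
    using mult_right_mono_neg[of "k / 2" "k - 1" "feedback x + \<epsilon>"] k2 assms(4) by simp
  ultimately have "k * y \<le> k * (c + (feedback x + \<epsilon>) / 2)"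
    using hi unfolding k_def[symmetric] distrib_left by linarith
  hence "y \<le> c + (feedback x + \<epsilon>) / 2" using k2 by simp
  thus ?thesis using y proj01_le_max_zero[of y] by linarith
qed

lemma next_state_ge_full_input:
  assumes "next_state x x'" "i < n" "feedback x \<le> \<epsilon>"
    and "\<And>j. j \<in> nbh x i \<Longrightarrow> c \<le> x j"
  shows "x' i \<ge> min 1 (c + (feedback x - \<epsilon>))"
proof -
  obtain y where y: "x' i = proj01 y"
    and lo: "(\<Sum>j\<in>nbh x i. x j) + (real (card (nbh x i)) - 1) * (feedback x - \<epsilon>) \<le> real (card (nbh x i)) * y"
    using next_state_bounds[OF assms(1,2)] by blast
  define k where "k = real (card (nbh x i))"
  have k1: "k \<ge> 1" using card_nbh_ge_1[OF assms(2)] by (simp add: k_def)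
  have "k * c \<le> (\<Sum>j\<in>nbh x i. x j)"
    using sum_mono[of "nbh x i" "\<lambda>_. c" x] assms(4) by (simp add: k_def)
  moreover have "(k - 1) * (feedback x - \<epsilon>) \<ge> k * (feedback x - \<epsilon>)"
    using assms(3) by (simp add: algebra_simps)
  ultimately have "k * (c + (feedback x - \<epsilon>)) \<le> k * y"
    using lo unfolding k_def[symmetric] by (simp add: algebra_simps)
  hence "c + (feedback x - \<epsilon>) \<le> y" using k1 by simp
  thus ?thesis using y min_one_le_proj01[of y] by linarith
qed

lemma next_state_same_nbh_close:
  assumes "next_state x x'" "i < n" "i' < n" "nbh x i = nbh x i'"
  shows "\<bar>x' i - x' i'\<bar> \<le> 2 * \<epsilon>"
proof -
  define k where "k = real (card (nbh x i))"
  define s where "s = (\<Sum>j\<in>nbh x i. x j)"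
  obtain y where y: "x' i = proj01 y"
    and "s + (k - 1) * (feedback x - \<epsilon>) \<le> k * y" "k * y \<le> s + (k - 1) * (feedback x + \<epsilon>)"
    using next_state_bounds[OF assms(1,2)] unfolding k_def s_def by blast
  moreover obtain y' where y': "x' i' = proj01 y'"
    and "s + (k - 1) * (feedback x - \<epsilon>) \<le> k * y'" "k * y' \<le> s + (k - 1) * (feedback x + \<epsilon>)"
    using next_state_bounds[OF assms(1,3)] assms(4) unfolding k_def s_def by metis
  moreover have "(k - 1) * (2 * \<epsilon>) \<le> k * (2 * \<epsilon>)" using parameter_bounds(1) by simp
  ultimately have "k * (y - y') \<le> k * (2 * \<epsilon>)" "k * (y' - y) \<le> k * (2 * \<epsilon>)"
    by (simp_all add: algebra_simps)
  moreover have k1: "k \<ge> 1" using card_nbh_ge_1[OF assms(2)] by (simp add: k_def)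
  ultimately have "\<bar>y - y'\<bar> \<le> 2 * \<epsilon>" by simp
  thus ?thesis using y y' abs_proj01_diff_le[of y y'] by linarith
qed

definition leads_to :: "nat \<Rightarrow> ((nat \<Rightarrow> real) \<Rightarrow> bool) \<Rightarrow> ((nat \<Rightarrow> real) \<Rightarrow> bool) \<Rightarrow> bool" where
  "leads_to T P Q \<longleftrightarrow>
     (\<forall>y. P (y 0) \<longrightarrow> (\<forall>t<T. next_state (y t) (y (Suc t))) \<longrightarrow> (\<exists>t\<le>T. Q (y t)))"

lemma leads_to_now: "(\<And>x. P x \<Longrightarrow> Q x) \<Longrightarrow> leads_to T P Q"
  unfolding leads_to_def by blast

lemma leads_to_pointwise: "(\<And>x. P x \<Longrightarrow> leads_to T ((=) x) Q) \<Longrightarrow> leads_to T P Q"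
  unfolding leads_to_def by blast

lemma leads_to_weaken:
  "leads_to T P Q \<Longrightarrow> (\<And>x. P' x \<Longrightarrow> P x) \<Longrightarrow> (\<And>x. Q x \<Longrightarrow> Q' x) \<Longrightarrow> leads_to T P' Q'"
  unfolding leads_to_def by blast

lemma leads_to_disj: "leads_to T P Q \<Longrightarrow> leads_to T (\<lambda>x. P x \<or> R x) (\<lambda>x. Q x \<or> R x)"
  unfolding leads_to_def by blast

lemma leads_to_trans:
  assumes PQ: "leads_to T1 P Q" and QR: "leads_to T2 Q R"
  shows "leads_to (T1 + T2) P R"
  unfolding leads_to_def
proof (intro allI impI)
  fix y assume P: "P (y 0)" and steps: "\<forall>t<T1 + T2. next_state (y t) (y (Suc t))"
  have "\<forall>t<T1. next_state (y t) (y (Suc t))" using steps by simp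
  then obtain t1 where t1: "t1 \<le> T1" "Q (y t1)" using PQ P unfolding leads_to_def by blast
  define y' where "y' s = y (t1 + s)" for s
  have "Q (y' 0)" "\<forall>t<T2. next_state (y' t) (y' (Suc t))" using t1 steps by (simp_all add: y'_def)
  then obtain t2 where "t2 \<le> T2" "R (y' t2)" using QR unfolding leads_to_def by blast
  thus "\<exists>t\<le>T1 + T2. R (y t)" using t1(1) by (intro exI[of _ "t1 + t2"]) (simp add: y'_def)
qed

lemma leads_to_by_progress:
  assumes step: "\<And>k x x'. k < N \<Longrightarrow> I k x \<Longrightarrow> \<not> Q x \<Longrightarrow> next_state x x' \<Longrightarrow> I (Suc k) x'"
    and final: "\<And>x. I N x \<Longrightarrow> Q x"
  shows "leads_to N (I 0) Q"
  unfolding leads_to_def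
proof (intro allI impI)
  fix y assume I0: "I 0 (y 0)" and steps: "\<forall>t<N. next_state (y t) (y (Suc t))"
  have "k \<le> N \<Longrightarrow> (\<exists>t\<le>k. Q (y t)) \<or> I k (y k)" for k
  proof (induction k)
    case (Suc k)
    hence k: "k < N" and IH: "(\<exists>t\<le>k. Q (y t)) \<or> I k (y k)" by auto
    show ?case
    proof (cases "\<exists>t\<le>k. Q (y t)")
      case True thus ?thesis using le_SucI by blast
    next
      case False
      hence "I k (y k)" "\<not> Q (y k)" using IH by auto
      hence "I (Suc k) (y (Suc k))" using step[OF k] steps k by blast
      thus ?thesis by blast
    qed
  qed (use I0 in simp)
  thus "\<exists>t\<le>N. Q (y t)" using final by blast
qed

lemma leads_to_one_step: "(\<And>x x'. P x \<Longrightarrow> next_state x x' \<Longrightarrow> Q x') \<Longrightarrow> leads_to 1 P Q"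
  unfolding leads_to_def by (metis One_nat_def le_refl less_one)

lemma leads_to_in_unit_cube:
  assumes "leads_to T P Q" "\<And>x. P x \<Longrightarrow> x \<in> unit_cube n"
  shows "leads_to T P (\<lambda>x. Q x \<and> x \<in> unit_cube n)"
  unfolding leads_to_def
proof (intro allI impI)
  fix y assume P: "P (y 0)" and steps: "\<forall>t<T. next_state (y t) (y (Suc t))"
  then obtain t where t: "t \<le> T" "Q (y t)" using assms(1) unfolding leads_to_def by blast
  have "y t \<in> unit_cube n"
  proof (cases t)
    case 0 thus ?thesis using P assms(2) by simp
  next
    case (Suc t')
    hence "next_state (y t') (y t)" using steps t(1) by simp
    thus ?thesis by (rule next_state_unit_cube)
  qed
  thus "\<exists>t\<le>T. Q (y t) \<and> y t \<in> unit_cube n" using t by blast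
qed

subsection \<open>Rising phase\<close>

definition "K = nat \<lceil>1 / \<gamma>\<rceil>"

lemma K_ge: "1 \<le> real K * \<gamma>"
proof -
  have "real K \<ge> 1 / \<gamma>" unfolding K_def by linarith
  thus ?thesis using parameter_bounds(4) by (simp add: field_simps)
qed

lemma feedback_up: "\<not> fully_connected x \<Longrightarrow> \<not> cluster_on_top x \<Longrightarrow> feedback x = push"
  by (simp add: feedback_def)

lemma feedback_down: "\<not> fully_connected x \<Longrightarrow> cluster_on_top x \<Longrightarrow> feedback x = - push"
  by (simp add: feedback_def)

definition min_nonisolated :: "(nat \<Rightarrow> real) \<Rightarrow> real" where
  "min_nonisolated x = Min (x ` nonisolated_agents x)"

lemma finite_nonisolated_agents: "finite (nonisolated_agents x)"
  by (auto simp: nonisolated_agents_def)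

lemma finite_isolated_agents: "finite (isolated_agents x)"
  by (auto simp: isolated_agents_def)

lemma min_nonisolated_le: "i \<in> nonisolated_agents x \<Longrightarrow> min_nonisolated x \<le> x i"
  unfolding min_nonisolated_def using finite_nonisolated_agents by simp

lemma min_nonisolated_attained:
  assumes "x \<in> unit_cube n"
  obtains a where "a \<in> nonisolated_agents x" "x a = min_nonisolated x"
proof -
  have "min_nonisolated x \<in> x ` nonisolated_agents x"
    unfolding min_nonisolated_def
    using finite_nonisolated_agents nonisolated_agents_nonempty[OF assms] by (intro Min_in) auto
  thus ?thesis using that by (metis imageE)
qed

lemma min_nonisolated_greatest:
  "x \<in> unit_cube n \<Longrightarrow> (\<And>i. i \<in> nonisolated_agents x \<Longrightarrow> c \<le> x i) \<Longrightarrow> c \<le> min_nonisolated x"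
  by (metis min_nonisolated_attained)

lemma min_nonisolated_nonneg: "x \<in> unit_cube n \<Longrightarrow> 0 \<le> min_nonisolated x"
  by (rule min_nonisolated_greatest) (auto simp: unit_cube_def nonisolated_agents_def)

lemma min_nonisolated_rises:
  assumes x: "x \<in> unit_cube n" and step: "next_state x x'"
    and up: "\<not> fully_connected x" "\<not> cluster_on_top x"
  shows "min_nonisolated x' \<ge> min 1 (min_nonisolated x + \<gamma>)"
proof -
  have fb: "feedback x = push" using feedback_up[OF up] .
  have rises: "x' l \<ge> min 1 (min_nonisolated x + \<gamma>)" if l: "l \<in> nonisolated_agents x" for l
  proof -
    have "x' l \<ge> min 1 (min_nonisolated x + (feedback x - \<epsilon>) / 2)"
      by (rule next_state_ge_half_input[OF step])
         (use l nbh_nonisolated_agents[OF l] min_nonisolated_le fb parameter_bounds in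
           \<open>auto simp: nonisolated_agents_def\<close>)
    thus ?thesis using fb parameter_bounds by (smt (verit))
  qed
  obtain a where a: "a \<in> nonisolated_agents x" "x a = min_nonisolated x"
    using min_nonisolated_attained[OF x] .
  have an: "a < n" using a by (simp add: nonisolated_agents_def)
  show ?thesis
  proof (rule min_nonisolated_greatest[OF next_state_unit_cube[OF step]])
    fix j assume j: "j \<in> nonisolated_agents x'"
    hence jn: "j < n" by (simp add: nonisolated_agents_def)
    show "min 1 (min_nonisolated x + \<gamma>) \<le> x' j"
    proof (cases "isolated x j")
      case False thus ?thesis using rises jn by (simp add: nonisolated_agents_def)
    next
      case iso: True
      have xj: "x' j = x j" using next_state_isolated[OF step x jn iso] .
      have "a \<noteq> j" using a iso by (auto simp: nonisolated_agents_def)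
      hence "r < \<bar>x a - x j\<bar>" using iso an by (simp add: isolated_def)
      moreover
      txt \<open>An isolated agent below the minimum stays isolated, as everybody else either
        stays put or rises.\<close>
      have "\<not> x j < min_nonisolated x - r"
      proof
        assume low: "x j < min_nonisolated x - r"
        have "min_nonisolated x \<le> 1" using a x an by (auto simp: unit_cube_def)
        have "isolated x' j" unfolding isolated_def
        proof (intro allI impI)
          fix l assume l: "l < n" "l \<noteq> j"
          show "r < \<bar>x' l - x' j\<bar>"
          proof (cases "isolated x l")
            case True
            hence "x' l = x l" using next_state_isolated[OF step x l(1)] by simp
            moreover have "r < \<bar>x l - x j\<bar>" using iso l by (auto simp: isolated_def)
            ultimately show ?thesis using xj by simp
          next
            case False
            hence "x' l \<ge> min 1 (min_nonisolated x + \<gamma>)"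
              using rises l by (simp add: nonisolated_agents_def)
            thus ?thesis using xj low \<open>min_nonisolated x \<le> 1\<close> parameter_bounds by auto
          qed
        qed
        thus False using j by (simp add: nonisolated_agents_def)
      qed
      ultimately show ?thesis using a xj parameter_bounds by auto
    qed
  qed
qed

lemma cluster_on_top_if_min_nonisolated_ge_1:
  assumes x: "x \<in> unit_cube n" and ge: "min_nonisolated x \<ge> 1"
  shows "cluster_on_top x"
proof -
  have one: "x i = 1" if "i \<in> nonisolated_agents x" for i
    using min_nonisolated_le[OF that] ge x that by (force simp: unit_cube_def nonisolated_agents_def)
  show ?thesis unfolding cluster_on_top_def
  proof (intro conjI ballI)
    fix i j assume "i \<in> nonisolated_agents x" "j \<in> nonisolated_agents x"
    thus "\<bar>x i - x j\<bar> \<le> 2 * \<epsilon>" using one parameter_bounds by simp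
  next
    fix a j assume a: "a \<in> isolated_agents x" and j: "j \<in> nonisolated_agents x"
    hence "r < \<bar>x j - x a\<bar>" "x a \<le> 1"
      using x by (auto simp: isolated_agents_def nonisolated_agents_def isolated_def unit_cube_def)
    thus "x a < x j - r" using one[OF j] by auto
  qed
qed

definition frozen_below :: "nat set \<Rightarrow> (nat \<Rightarrow> real) \<Rightarrow> real \<Rightarrow> (nat \<Rightarrow> real) \<Rightarrow> bool" where
  "frozen_below F v c x \<longleftrightarrow> x \<in> unit_cube n \<and> (\<forall>a\<in>F. a < n \<and> isolated x a \<and> x a = v a) \<and>
     (\<forall>j<n. j \<notin> F \<longrightarrow> c \<le> x j)"

definition below_floor :: "nat set \<Rightarrow> (nat \<Rightarrow> real) \<Rightarrow> real \<Rightarrow> bool" where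
  "below_floor F v c \<longleftrightarrow> (\<forall>a\<in>F. v a < c - r) \<and> c \<le> 1"

lemma next_state_above_floor:
  assumes fr: "frozen_below F v c x" and step: "next_state x x'"
    and up: "\<not> fully_connected x" "\<not> cluster_on_top x"
    and j: "j < n" "j \<notin> F" "\<not> isolated x j"
  shows "x' j \<ge> min 1 (c + \<gamma>)"
proof -
  have fb: "feedback x = push" using feedback_up[OF up] .
  have "x' j \<ge> min 1 (c + (feedback x - \<epsilon>) / 2)"
  proof (rule next_state_ge_half_input[OF step j(1) j(3)])
    fix l assume l: "l \<in> nbh x j"
    have "l \<notin> F" using isolated_mem_nbh[OF j(1) _ l] fr j by (auto simp: frozen_below_def)
    thus "c \<le> x l" using l fr by (auto simp: frozen_below_def mem_nbh_iff)
  qed (use fb parameter_bounds in auto)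
  moreover have "c + \<gamma> \<le> c + (feedback x - \<epsilon>) / 2" using fb parameter_bounds by simp
  ultimately show ?thesis by (meson min.mono order.refl order.trans)
qed

lemma next_state_frozen_below:
  assumes fr: "frozen_below F v c x" and gap: "below_floor F v c" and step: "next_state x x'"
    and up: "\<not> fully_connected x" "\<not> cluster_on_top x"
  shows "frozen_below F v c x'"
proof -
  have x: "x \<in> unit_cube n" using fr by (simp add: frozen_below_def)
  have c1: "c \<le> 1" using gap by (simp add: below_floor_def)
  have floor: "c \<le> x' j" if j: "j < n" "j \<notin> F" for j
  proof (cases "isolated x j")
    case True thus ?thesis using next_state_isolated[OF step x j(1)] fr j by (simp add: frozen_below_def)
  next
    case False
    thus ?thesis using next_state_above_floor[OF fr step up j False] c1 parameter_bounds by linarith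
  qed
  have frozen: "a < n \<and> isolated x' a \<and> x' a = v a" if a: "a \<in> F" for a
  proof -
    have an: "a < n" "isolated x a" "x a = v a" using fr a by (auto simp: frozen_below_def)
    have xa: "x' a = v a" using next_state_isolated[OF step x an(1,2)] an by simp
    have "isolated x' a" unfolding isolated_def
    proof (intro allI impI)
      fix l assume l: "l < n" "l \<noteq> a"
      show "r < \<bar>x' l - x' a\<bar>"
      proof (cases "l \<in> F")
        case True
        hence "x' l = x l" using fr next_state_isolated[OF step x l(1)] by (auto simp: frozen_below_def)
        moreover have "r < \<bar>x l - x a\<bar>" using an l by (auto simp: isolated_def)
        ultimately show ?thesis using xa an by simp
      next
        case False
        thus ?thesis using floor[OF l(1) False] xa gap a by (auto simp: below_floor_def)
      qed
    qed
    thus ?thesis using an xa by simp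
  qed
  show ?thesis using next_state_unit_cube[OF step] floor frozen by (auto simp: frozen_below_def)
qed

lemma rising_phase:
  assumes gap: "below_floor F v c"
  shows "leads_to K (frozen_below F v c)
           (\<lambda>x. (cluster_on_top x \<or> fully_connected x) \<and> frozen_below F v c x)"
proof -
  define I where "I k x \<longleftrightarrow> frozen_below F v c x \<and> min 1 (real k * \<gamma>) \<le> min_nonisolated x" for k x
  have "leads_to K (I 0) (\<lambda>x. (cluster_on_top x \<or> fully_connected x) \<and> frozen_below F v c x)"
  proof (rule leads_to_by_progress)
    fix k x x' assume I: "I k x" and stop: "\<not> ((cluster_on_top x \<or> fully_connected x) \<and> frozen_below F v c x)"
      and step: "next_state x x'"
    have fr: "frozen_below F v c x" and x: "x \<in> unit_cube n" using I by (auto simp: I_def frozen_below_def)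
    have up: "\<not> fully_connected x" "\<not> cluster_on_top x" using stop fr by auto
    have "real (Suc k) * \<gamma> = real k * \<gamma> + \<gamma>" by (simp add: algebra_simps)
    hence "min 1 (real (Suc k) * \<gamma>) \<le> min 1 (min_nonisolated x + \<gamma>)"
      using I parameter_bounds(4) unfolding I_def min_def by (auto split: if_splits)
    also have "\<dots> \<le> min_nonisolated x'" using min_nonisolated_rises[OF x step up] .
    finally show "I (Suc k) x'" using next_state_frozen_below[OF fr gap step up] by (simp add: I_def)
  next
    fix x assume "I K x"
    thus "(cluster_on_top x \<or> fully_connected x) \<and> frozen_below F v c x"
      using K_ge cluster_on_top_if_min_nonisolated_ge_1 by (auto simp: I_def frozen_below_def)
  qed
  thus ?thesis by (rule leads_to_weaken) (auto simp: I_def frozen_below_def min_nonisolated_nonneg)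
qed

lemma isolated_agents_nonempty:
  assumes "cluster_on_top x" "\<not> fully_connected x"
  shows "isolated_agents x \<noteq> {}"
proof
  assume "isolated_agents x = {}"
  hence NI: "i \<in> nonisolated_agents x" if "i < n" for i
    using that by (auto simp: isolated_agents_def nonisolated_agents_def)
  have "fully_connected x" unfolding fully_connected_def
  proof (intro allI impI)
    fix i j assume "i < n" "j < n"
    hence "\<bar>x i - x j\<bar> \<le> 2 * \<epsilon>" using NI assms(1) unfolding cluster_on_top_def by blast
    thus "\<bar>x i - x j\<bar> \<le> r" using parameter_bounds(6) r_pos by linarith
  qed
  thus False using assms(2) by blast
qed

subsection \<open>Descending rounds\<close>

context
  fixes x0 :: "nat \<Rightarrow> real" and h :: nat
  assumes x0_cube: "x0 \<in> unit_cube n" and x0_cluster: "cluster_on_top x0"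
    and x0_not_full: "\<not> fully_connected x0" and highest_isolated: "h \<in> isolated_agents x0"
    and highest_max: "\<forall>a\<in>isolated_agents x0. x0 a \<le> x0 h"
begin

abbreviation "lower \<equiv> isolated_agents x0 - {h}"
abbreviation "cluster \<equiv> nonisolated_agents x0"

lemma highest_lt_n: "h < n"
  using highest_isolated by (simp add: isolated_agents_def)

lemma lower_below_highest: "a \<in> lower \<Longrightarrow> x0 a < x0 h - r"
proof -
  assume a: "a \<in> lower"
  hence "isolated x0 a" "h \<noteq> a" "x0 a \<le> x0 h"
    using highest_max by (auto simp: isolated_agents_def)
  hence "r < \<bar>x0 h - x0 a\<bar>" using highest_lt_n by (auto simp: isolated_def)
  thus ?thesis using \<open>x0 a \<le> x0 h\<close> by auto
qed

lemma cluster_above_highest: "j \<in> cluster \<Longrightarrow> x0 h + r < x0 j"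
  using x0_cluster highest_isolated unfolding cluster_on_top_def by fastforce

lemma cluster_partner: "i \<in> cluster \<Longrightarrow> \<exists>j\<in>cluster. j \<noteq> i"
proof -
  assume i: "i \<in> cluster"
  then obtain j where j: "j < n" "j \<noteq> i" "\<bar>x0 j - x0 i\<bar> \<le> r"
    by (auto simp: nonisolated_agents_def isolated_def not_less)
  hence "j \<in> nbh x0 i" by (simp add: mem_nbh_iff)
  thus ?thesis using nbh_nonisolated_agents[OF i] j by blast
qed

lemma highest_below_one: "x0 h + r < 1"
proof -
  obtain j where "j \<in> cluster" using nonisolated_agents_nonempty[OF x0_cube] by blast
  hence "x0 h + r < x0 j" "x0 j \<le> 1"
    using cluster_above_highest x0_cube by (auto simp: unit_cube_def nonisolated_agents_def)
  thus ?thesis by linarith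
qed

lemma agent_cases: "j < n \<Longrightarrow> j \<in> lower \<or> j = h \<or> j \<in> cluster"
  by (auto simp: isolated_agents_def nonisolated_agents_def)

definition descending :: "(nat \<Rightarrow> real) \<Rightarrow> bool" where
  "descending x \<longleftrightarrow> x \<in> unit_cube n \<and> (\<forall>a\<in>lower. isolated x a \<and> x a = x0 a) \<and> x h = x0 h \<and>
     (\<forall>j\<in>cluster. x0 h + r / 4 \<le> x j) \<and> (\<forall>i\<in>cluster. \<forall>j\<in>cluster. \<bar>x i - x j\<bar> \<le> 2 * \<epsilon>)"

lemma descending_start: "descending x0"
  using x0_cube x0_cluster cluster_above_highest r_pos highest_isolated
  by (force simp: descending_def isolated_agents_def cluster_on_top_def)

lemma descending_cluster_nonisolated: "descending x \<Longrightarrow> i \<in> cluster \<Longrightarrow> \<not> isolated x i"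
proof -
  assume x: "descending x" and i: "i \<in> cluster"
  obtain j where j: "j \<in> cluster" "j \<noteq> i" using cluster_partner[OF i] by blast
  have "\<bar>x j - x i\<bar> \<le> r" using x i j parameter_bounds(1,6) unfolding descending_def by fastforce
  thus ?thesis using j by (auto simp: isolated_def nonisolated_agents_def)
qed

lemma descending_cluster_on_top:
  assumes x: "descending x" and C: "cluster_on_top x"
  shows "isolated x h" and "\<And>i. i \<in> cluster \<Longrightarrow> nbh x i = cluster"
    and "\<And>j. j \<in> cluster \<Longrightarrow> x0 h + r < x j"
proof -
  obtain j0 where j0: "j0 \<in> cluster" using nonisolated_agents_nonempty[OF x0_cube] by blast
  have j0': "j0 \<in> nonisolated_agents x"
    using descending_cluster_nonisolated[OF x j0] j0 by (auto simp: nonisolated_agents_def)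
  show h_iso: "isolated x h"
  proof (rule ccontr)
    assume "\<not> isolated x h"
    hence "h \<in> nonisolated_agents x" using highest_lt_n by (simp add: nonisolated_agents_def)
    hence "\<bar>x h - x j0\<bar> \<le> 2 * \<epsilon>" using C j0' by (auto simp: cluster_on_top_def)
    moreover have "x j0 \<ge> x0 h + r / 4" "x h = x0 h" using x j0 by (auto simp: descending_def)
    ultimately show False using parameter_bounds(1,6) by auto
  qed
  show "nbh x i = cluster" if i: "i \<in> cluster" for i
  proof
    have i_n: "i < n" using i by (simp add: nonisolated_agents_def)
    show "nbh x i \<subseteq> cluster"
    proof
      fix l assume l: "l \<in> nbh x i"
      have "l \<notin> lower"
        using isolated_mem_nbh[OF i_n _ l] x i by (auto simp: descending_def nonisolated_agents_def isolated_agents_def)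
      moreover have "l \<noteq> h"
        using isolated_mem_nbh[OF i_n h_iso] l i highest_isolated
        by (auto simp: nonisolated_agents_def isolated_agents_def)
      ultimately show "l \<in> cluster" using agent_cases l by (auto simp: mem_nbh_iff)
    qed
    show "cluster \<subseteq> nbh x i"
      using x i parameter_bounds(1,6) unfolding descending_def
      by (force simp: mem_nbh_iff nonisolated_agents_def abs_minus_commute)
  qed
  show "x0 h + r < x j" if j: "j \<in> cluster" for j
  proof -
    have "h \<in> isolated_agents x" using h_iso highest_lt_n by (simp add: isolated_agents_def)
    moreover have "j \<in> nonisolated_agents x"
      using descending_cluster_nonisolated[OF x j] j by (auto simp: nonisolated_agents_def)
    ultimately have "x h < x j - r" using C by (auto simp: cluster_on_top_def)
    thus ?thesis using x by (simp add: descending_def)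
  qed
qed

lemma descending_step:
  assumes x: "descending x" and C: "cluster_on_top x" and nf: "\<not> fully_connected x"
    and step: "next_state x x'" and M: "\<forall>j\<in>cluster. x j \<le> M"
  shows "descending x' \<and> (\<forall>j\<in>cluster. x' j \<le> M - \<gamma>)"
proof -
  have fb: "feedback x = - push" using feedback_down[OF nf C] .
  have xc: "x \<in> unit_cube n" using x by (simp add: descending_def)
  have h_iso: "isolated x h" using descending_cluster_on_top(1)[OF x C] .
  have x'h: "x' h = x0 h"
    using next_state_isolated[OF step xc highest_lt_n h_iso] x by (simp add: descending_def)
  have above: "x0 h + r / 4 \<le> x' j" if j: "j \<in> cluster" for j
  proof -
    have jn: "j < n" using j by (simp add: nonisolated_agents_def)
    have "x' j \<ge> min 1 ((x0 h + r) + (feedback x - \<epsilon>))"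
      by (rule next_state_ge_full_input[OF step jn])
         (use descending_cluster_on_top(2,3)[OF x C] j fb push_pos parameter_bounds(1) in
           \<open>auto simp: less_eq_real_def\<close>)
    moreover have "x0 h + r / 4 \<le> min 1 ((x0 h + r) + (feedback x - \<epsilon>))"
      using fb parameter_bounds highest_below_one r_pos by simp
    ultimately show ?thesis by linarith
  qed
  have below: "x' j \<le> M - \<gamma>" if j: "j \<in> cluster" for j
  proof -
    have jn: "j < n" using j by (simp add: nonisolated_agents_def)
    have "x' j \<le> max 0 (M + (feedback x + \<epsilon>) / 2)"
      by (rule next_state_le_half_input[OF step jn descending_cluster_nonisolated[OF x j]])
         (use descending_cluster_on_top(2)[OF x C j] M fb parameter_bounds in auto)
    moreover have "(feedback x + \<epsilon>) / 2 \<le> - \<gamma>" using fb parameter_bounds(5) by simp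
    moreover have "x' j > 0" using above[OF j] x0_cube highest_lt_n r_pos by (auto simp: unit_cube_def)
    ultimately show ?thesis by linarith
  qed
  have tight: "\<bar>x' i - x' j\<bar> \<le> 2 * \<epsilon>" if "i \<in> cluster" "j \<in> cluster" for i j
    using next_state_same_nbh_close[OF step] descending_cluster_on_top(2)[OF x C] that
    by (simp add: nonisolated_agents_def)
  have lower_frozen: "isolated x' a \<and> x' a = x0 a" if a: "a \<in> lower" for a
  proof -
    have an: "a < n" "isolated x a" "x a = x0 a"
      using x a by (auto simp: descending_def isolated_agents_def)
    have x'a: "x' a = x0 a" using next_state_isolated[OF step xc an(1,2)] an by simp
    have "isolated x' a" unfolding isolated_def
    proof (intro allI impI)
      fix l assume l: "l < n" "l \<noteq> a"
      consider "l \<in> lower" | "l = h" | "l \<in> cluster" using agent_cases[OF l(1)] by blast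
      thus "r < \<bar>x' l - x' a\<bar>"
      proof cases
        case 1
        hence "x' l = x0 l" using x next_state_isolated[OF step xc l(1)] by (auto simp: descending_def)
        moreover have "isolated x0 a" using a by (simp add: isolated_agents_def)
        hence "r < \<bar>x0 l - x0 a\<bar>" using l by (auto simp: isolated_def)
        ultimately show ?thesis using x'a by simp
      next
        case 2 thus ?thesis using x'h x'a lower_below_highest[OF a] by auto
      next
        case 3 thus ?thesis using above[OF 3] x'a lower_below_highest[OF a] r_pos by auto
      qed
    qed
    thus ?thesis using x'a by simp
  qed
  show ?thesis
    unfolding descending_def using next_state_unit_cube[OF step] lower_frozen x'h above tight below
    by blast
qed

lemma descending_exit_highest_joins:
  assumes x: "descending x" and nC: "\<not> cluster_on_top x"
  shows "\<not> isolated x h"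
proof
  assume h_iso: "isolated x h"
  have in_cluster: "i \<in> cluster" if "i \<in> nonisolated_agents x" for i
  proof -
    have "i < n" "\<not> isolated x i" using that by (auto simp: nonisolated_agents_def)
    moreover have "i \<notin> lower" using x \<open>\<not> isolated x i\<close> by (auto simp: descending_def)
    moreover have "i \<noteq> h" using h_iso \<open>\<not> isolated x i\<close> by auto
    ultimately show ?thesis using agent_cases by blast
  qed
  have "cluster_on_top x" unfolding cluster_on_top_def
  proof (intro conjI ballI)
    fix i j assume "i \<in> nonisolated_agents x" "j \<in> nonisolated_agents x"
    thus "\<bar>x i - x j\<bar> \<le> 2 * \<epsilon>" using in_cluster x by (auto simp: descending_def)
  next
    fix a j assume a: "a \<in> isolated_agents x" and j: "j \<in> nonisolated_agents x"
    have jc: "j \<in> cluster" using in_cluster[OF j] .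
    have xj: "x0 h + r / 4 \<le> x j" using x jc by (simp add: descending_def)
    have "a \<in> lower \<or> a = h"
      using a agent_cases descending_cluster_nonisolated[OF x] by (auto simp: isolated_agents_def)
    thus "x a < x j - r"
    proof
      assume a: "a \<in> lower"
      hence "x a = x0 a" using x by (simp add: descending_def)
      thus ?thesis using lower_below_highest[OF a] xj r_pos by linarith
    next
      assume a_top: "a = h"
      have "j < n" "j \<noteq> h" using j h_iso by (auto simp: nonisolated_agents_def)
      hence "r < \<bar>x j - x h\<bar>" using h_iso by (auto simp: isolated_def)
      thus ?thesis using a_top x xj r_pos by (auto simp: descending_def)
    qed
  qed
  thus False using nC by simp
qed

lemma descending_exit_step:
  assumes x: "descending x" and nC: "\<not> cluster_on_top x" and nf: "\<not> fully_connected x"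
    and step: "next_state x x'"
  shows "frozen_below lower x0 (x0 h + \<gamma>) x'"
proof -
  have above_top: "x0 h \<le> x j" if "j < n" "j \<notin> lower" for j
    using agent_cases[OF that(1)] that(2) x r_pos by (auto simp: descending_def)
  have fr: "frozen_below lower x0 (x0 h) x"
    using x above_top by (auto simp: frozen_below_def descending_def isolated_agents_def)
  have gap: "below_floor lower x0 (x0 h)"
    using lower_below_highest highest_below_one r_pos by (auto simp: below_floor_def)
  have fr': "frozen_below lower x0 (x0 h) x'" using next_state_frozen_below[OF fr gap step nf nC] .
  have raised: "x0 h + \<gamma> \<le> x' j" if j: "j < n" "j \<notin> lower" for j
  proof -
    have "\<not> isolated x j"
      using descending_exit_highest_joins[OF x nC] agent_cases[OF j(1)] j(2) descending_cluster_nonisolated[OF x]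
      by auto
    moreover have "x0 h + \<gamma> \<le> 1" using highest_below_one parameter_bounds(7) r_pos by linarith
    ultimately show ?thesis using next_state_above_floor[OF fr step nf nC j] by simp
  qed
  show ?thesis using fr' raised by (auto simp: frozen_below_def)
qed

lemma descending_phase:
  "leads_to K ((=) x0) (\<lambda>x. descending x \<and> (fully_connected x \<or> \<not> cluster_on_top x))"
proof -
  define I where "I k x \<longleftrightarrow> descending x \<and> (\<forall>j\<in>cluster. x j \<le> 1 - real k * \<gamma>)" for k x
  have "leads_to K (I 0) (\<lambda>x. descending x \<and> (fully_connected x \<or> \<not> cluster_on_top x))"
  proof (rule leads_to_by_progress)
    fix k x x' assume "I k x" "\<not> (descending x \<and> (fully_connected x \<or> \<not> cluster_on_top x))"
      and step: "next_state x x'"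
    thus "I (Suc k) x'"
      using descending_step[OF _ _ _ step, of "1 - real k * \<gamma>"] by (auto simp: I_def algebra_simps)
  next
    fix x assume I: "I K x"
    obtain j where j: "j \<in> cluster" using nonisolated_agents_nonempty[OF x0_cube] by blast
    have "x j \<le> 0" using I j K_ge by (auto simp: I_def)
    moreover have "x0 h + r / 4 \<le> x j" "0 \<le> x0 h"
      using I j x0_cube highest_lt_n by (auto simp: I_def descending_def unit_cube_def)
    ultimately show "descending x \<and> (fully_connected x \<or> \<not> cluster_on_top x)" using r_pos by linarith
  qed
  thus ?thesis
    by (rule leads_to_weaken) (use descending_start x0_cube in \<open>auto simp: I_def unit_cube_def nonisolated_agents_def\<close>)
qed

lemma below_floor_lower: "below_floor lower x0 (x0 h + \<gamma>)"
  using lower_below_highest highest_below_one parameter_bounds(4,7) by (fastforce simp: below_floor_def)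

text \<open>The cluster descends to the highest isolated agent, absorbs it, and the enlarged group
  rises again.\<close>
lemma sweep_round:
  "leads_to (K + 1 + K) ((=) x0)
     (\<lambda>x. fully_connected x \<or> cluster_on_top x \<and> frozen_below lower x0 (x0 h + \<gamma>) x)"
proof -
  have exit: "leads_to 1 (\<lambda>x. descending x \<and> (fully_connected x \<or> \<not> cluster_on_top x))
                (\<lambda>x. frozen_below lower x0 (x0 h + \<gamma>) x \<or> fully_connected x)"
  proof (rule leads_to_pointwise)
    fix x assume x: "descending x \<and> (fully_connected x \<or> \<not> cluster_on_top x)"
    show "leads_to 1 ((=) x) (\<lambda>x. frozen_below lower x0 (x0 h + \<gamma>) x \<or> fully_connected x)"
    proof (cases "fully_connected x")
      case True thus ?thesis by (intro leads_to_now) auto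
    next
      case False
      thus ?thesis using x descending_exit_step by (intro leads_to_one_step) auto
    qed
  qed
  have rise: "leads_to K (\<lambda>x. frozen_below lower x0 (x0 h + \<gamma>) x \<or> fully_connected x)
                (\<lambda>x. fully_connected x \<or> cluster_on_top x \<and> frozen_below lower x0 (x0 h + \<gamma>) x)"
    by (rule leads_to_weaken[OF leads_to_disj[OF rising_phase[OF below_floor_lower]]]) auto
  show ?thesis using leads_to_trans[OF leads_to_trans[OF descending_phase exit] rise] .
qed

end

subsection \<open>Sweeping up the isolated agents\<close>

lemma card_isolated_agents_diff_le: "card (isolated_agents x - A) \<le> n"
  by (rule order.trans[OF card_mono[of "{..<n}"]]) (auto simp: isolated_agents_def)

text \<open>\<open>l\<close> bounds the number of \<open>\<gamma>\<close>-levels left between the floor and \<open>1\<close>, and \<open>s\<close> the number of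
  isolated agents that are not yet frozen.\<close>
fun sweep_time :: "nat \<Rightarrow> nat \<Rightarrow> nat" where
  "sweep_time 0 s = 0"
| "sweep_time (Suc l) 0 = 0"
| "sweep_time (Suc l) (Suc s) = (K + 1 + K) + sweep_time l n + sweep_time (Suc l) s"

definition sweep_ready :: "nat set \<Rightarrow> (nat \<Rightarrow> real) \<Rightarrow> real \<Rightarrow> nat \<Rightarrow> (nat \<Rightarrow> real) \<Rightarrow> bool" where
  "sweep_ready F v c s x \<longleftrightarrow>
     (cluster_on_top x \<or> fully_connected x) \<and> frozen_below F v c x \<and> card (isolated_agents x - F) \<le> s"

definition sweep_done :: "nat set \<Rightarrow> (nat \<Rightarrow> real) \<Rightarrow> real \<Rightarrow> (nat \<Rightarrow> real) \<Rightarrow> bool" where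
  "sweep_done F v c x \<longleftrightarrow>
     fully_connected x \<or> cluster_on_top x \<and> isolated_agents x = F \<and> frozen_below F v c x"

lemma sweep_finished:
  assumes ready: "sweep_ready F v c s x" and lev: "1 - c \<le> real l * \<gamma>" and ls: "l = 0 \<or> s = 0"
  shows "sweep_done F v c x"
proof -
  have fr: "frozen_below F v c x" and cnt: "card (isolated_agents x - F) \<le> s"
    using ready by (auto simp: sweep_ready_def)
  have x: "x \<in> unit_cube n" and F: "F \<subseteq> isolated_agents x"
    using fr by (auto simp: frozen_below_def isolated_agents_def)
  have False if a: "a \<in> isolated_agents x - F" for a
    using ls
  proof
    assume "s = 0"
    thus False using cnt a finite_isolated_agents[of x] by auto
  next
    assume "l = 0"
    hence at_one: "x j = 1" if "j < n" "j \<notin> F" for j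
      using fr lev x that by (force simp: frozen_below_def unit_cube_def)
    obtain j where j: "j \<in> nonisolated_agents x" using nonisolated_agents_nonempty[OF x] by blast
    have "j \<noteq> a" "j < n" "j \<notin> F" "a < n"
      using j a F by (auto simp: nonisolated_agents_def isolated_agents_def)
    moreover have "isolated x a" using a by (simp add: isolated_agents_def)
    ultimately have "r < \<bar>x j - x a\<bar>" by (simp add: isolated_def)
    thus False using at_one \<open>j < n\<close> \<open>j \<notin> F\<close> at_one[of a] a r_pos by (simp add: isolated_agents_def)
  qed
  hence "isolated_agents x = F" using F by blast
  thus ?thesis using ready by (auto simp: sweep_ready_def sweep_done_def)
qed

lemma sweep_highest:
  assumes fr: "frozen_below F v c x" and gap: "below_floor F v c" and ne: "isolated_agents x \<noteq> F"
  obtains h where "h \<in> isolated_agents x" "\<forall>a\<in>isolated_agents x. x a \<le> x h"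
    "h \<notin> F" "c \<le> x h"
proof -
  have F: "F \<subseteq> isolated_agents x" using fr by (auto simp: frozen_below_def isolated_agents_def)
  then obtain b where b: "b \<in> isolated_agents x" "b \<notin> F" using ne by blast
  have "Max (x ` isolated_agents x) \<in> x ` isolated_agents x"
    using b finite_isolated_agents by (intro Max_in) auto
  then obtain h where h: "h \<in> isolated_agents x" "x h = Max (x ` isolated_agents x)" by auto
  have h_max: "\<forall>a\<in>isolated_agents x. x a \<le> x h" using h finite_isolated_agents by simp
  have "c \<le> x b" using fr b by (auto simp: frozen_below_def isolated_agents_def)
  hence c_h: "c \<le> x h" using h_max b by force
  have "h \<notin> F"
  proof
    assume "h \<in> F"
    hence "x h < c - r" using fr gap by (auto simp: frozen_below_def below_floor_def)
    thus False using c_h r_pos by linarith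
  qed
  thus ?thesis using that h h_max c_h by blast
qed

lemma frozen_below_trans:
  assumes "frozen_below F v c y" "frozen_below G y c' x" "F \<subseteq> G" "c \<le> c'"
  shows "frozen_below F v c x"
  using assms unfolding frozen_below_def by (smt (verit) subsetD)

lemma sweep:
  assumes "below_floor F v c" "1 - c \<le> real l * \<gamma>"
  shows "leads_to (sweep_time l s) (sweep_ready F v c s) (sweep_done F v c)"
  using assms
proof (induction l s arbitrary: F v c rule: sweep_time.induct)
  case (1 s)
  show ?case using sweep_finished[where l = 0] "1.prems"(2) by (intro leads_to_now) blast
next
  case (2 l)
  show ?case using sweep_finished[where s = 0] "2.prems"(2) by (intro leads_to_now) blast
next
  case (3 l s)
  show ?case
  proof (rule leads_to_pointwise)
    fix x0 assume ready: "sweep_ready F v c (Suc s) x0"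
    hence fr: "frozen_below F v c x0" and x0: "x0 \<in> unit_cube n"
      by (auto simp: sweep_ready_def frozen_below_def)
    show "leads_to (sweep_time (Suc l) (Suc s)) ((=) x0) (sweep_done F v c)"
    proof (cases "fully_connected x0 \<or> isolated_agents x0 = F")
      case True thus ?thesis using ready by (intro leads_to_now) (auto simp: sweep_ready_def sweep_done_def)
    next
      case False
      hence nf: "\<not> fully_connected x0" and C: "cluster_on_top x0" using ready by (auto simp: sweep_ready_def)
      obtain h where h: "h \<in> isolated_agents x0" "\<forall>a\<in>isolated_agents x0. x0 a \<le> x0 h" "h \<notin> F" "c \<le> x0 h"
        using sweep_highest[OF fr "3.prems"(1)] False by blast
      define F' where "F' = isolated_agents x0 - {h}"
      define c' where "c' = x0 h + \<gamma>"
      have FF': "F \<subseteq> F'" using fr h(3) by (auto simp: F'_def frozen_below_def isolated_agents_def)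
      note round = sweep_round[OF x0 C nf h(1,2), folded F'_def c'_def]
      have outer: "leads_to (sweep_time l n) (sweep_ready F' x0 c' n) (sweep_done F' x0 c')"
        using "3.IH"(1) below_floor_lower[OF x0 C nf h(1,2)] "3.prems"(2) h(4)
        by (simp add: F'_def c'_def algebra_simps)
      have inner: "leads_to (sweep_time (Suc l) s) (sweep_ready F v c s) (sweep_done F v c)"
        using "3.IH"(2) "3.prems" by blast
      txt \<open>Once \<open>F'\<close> is exactly the set of isolated agents, \<open>h\<close> has been absorbed, so one
        isolated agent fewer lies outside \<open>F\<close>.\<close>
      have resume: "sweep_ready F v c s x" if "sweep_done F' x0 c' x" "\<not> fully_connected x" for x
      proof -
        have x: "cluster_on_top x" "isolated_agents x = F'" "frozen_below F' x0 c' x"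
          using that by (auto simp: sweep_done_def)
        have "isolated_agents x - F = (isolated_agents x0 - F) - {h}" using x(2) by (auto simp: F'_def)
        hence "card (isolated_agents x - F) = card (isolated_agents x0 - F) - 1"
          using h(1,3) finite_isolated_agents by simp
        moreover have "frozen_below F v c x"
          using frozen_below_trans[OF fr x(3) FF'] h(4) parameter_bounds(4) by (simp add: c'_def)
        ultimately show ?thesis using x(1) ready by (auto simp: sweep_ready_def)
      qed
      have outer': "leads_to (sweep_time l n) (\<lambda>x. fully_connected x \<or> cluster_on_top x \<and> frozen_below F' x0 c' x)
          (\<lambda>x. sweep_ready F v c s x \<or> fully_connected x)"
        by (rule leads_to_weaken[OF leads_to_disj[OF outer, of fully_connected]])
           (use card_isolated_agents_diff_le resume in \<open>auto simp: sweep_ready_def\<close>)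
      have inner': "leads_to (sweep_time (Suc l) s) (\<lambda>x. sweep_ready F v c s x \<or> fully_connected x)
          (sweep_done F v c)"
        by (rule leads_to_weaken[OF leads_to_disj[OF inner, of fully_connected]]) (auto simp: sweep_done_def)
      show ?thesis using leads_to_trans[OF leads_to_trans[OF round outer'] inner'] by simp
    qed
  qed
qed

subsection \<open>Convergence in a complete confidence graph\<close>

lemma fully_connected_nbh: "fully_connected x \<Longrightarrow> i < n \<Longrightarrow> nbh x i = {..<n}"
  by (auto simp: fully_connected_def mem_nbh_iff)

text \<open>Every agent averages over all agents, so the whole group is shifted as its mean is.\<close>
lemma fully_connected_step:
  assumes full: "fully_connected x" and step: "next_state x x'" and B: "\<forall>i<n. \<bar>x i - z\<bar> \<le> B"
  shows "fully_connected x' \<and> (\<forall>i<n. \<bar>x' i - z\<bar> \<le> max \<epsilon> (B - push / 2))"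
proof -
  define S where "S = (\<Sum>j<n. x j)"
  define N where "N = real n"
  define w where "w = feedback x"
  have N3: "N \<ge> 3" using n_ge_3 by (simp add: N_def)
  have S_mean: "S = N * mean x" using N3 by (simp add: S_def mean_def N_def)
  have S_lo: "N * (z - B) \<le> S"
    using sum_mono[of "{..<n}" "\<lambda>_. z - B" x] B by (force simp: S_def N_def)
  have S_hi: "S \<le> N * (z + B)"
    using sum_mono[of "{..<n}" x "\<lambda>_. z + B"] B by (force simp: S_def N_def)
  have w: "w = max (- push) (min push ((z - mean x) * N / (N - 1)))"
    using full by (simp add: w_def feedback_def centering_input_def N_def)
  txt \<open>A saturated input still moves the agents by more than \<open>push/2\<close>, as \<open>n \<ge> 3\<close>.\<close>
  have key: "(N - 1) * (push - \<epsilon>) \<ge> N * (push / 2)"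
  proof -
    have "(N - 1) * (push - \<epsilon>) \<ge> (2 * N / 3) * (7 * push / 8)"
      using N3 parameter_bounds(3) push_pos by (intro mult_mono) auto
    moreover have "(2 * N / 3) * (7 * push / 8) \<ge> N * (push / 2)"
      using N3 push_pos by (simp add: field_simps)
    ultimately show ?thesis by linarith
  qed
  have e1: "(N - 1) * \<epsilon> \<le> N * \<epsilon>" using parameter_bounds(1) by simp
  have close: "\<bar>y - z\<bar> \<le> max \<epsilon> (B - push / 2)"
    if lo: "S + (N - 1) * (w - \<epsilon>) \<le> N * y" and hi: "N * y \<le> S + (N - 1) * (w + \<epsilon>)" for y
  proof -
    consider "\<bar>(z - mean x) * N / (N - 1)\<bar> \<le> push" | "(z - mean x) * N / (N - 1) > push"
      | "(z - mean x) * N / (N - 1) < - push"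
      by linarith
    thus ?thesis
    proof cases
      case 1
      hence "(z - mean x) * N / (N - 1) \<le> push" "- ((z - mean x) * N / (N - 1)) \<le> push"
        by (simp_all only: abs_le_iff)
      hence "w = (z - mean x) * N / (N - 1)" using w by (simp add: max_def min_def)
      hence w1: "(N - 1) * w = (z - mean x) * N" using N3 by simp
      have "N * (z - \<epsilon>) \<le> N * y" "N * y \<le> N * (z + \<epsilon>)"
        using lo hi w1 e1 S_mean by (simp_all add: algebra_simps)
      hence "z - \<epsilon> \<le> y" "y \<le> z + \<epsilon>" using N3 by simp_all
      thus ?thesis by simp
    next
      case 2
      hence wp: "w = push" using w push_pos by simp
      have "(z - mean x) * N > (N - 1) * push" using 2 N3 by (simp add: field_simps)
      hence "N * y < N * (z + \<epsilon>)" using hi wp e1 S_mean by (simp add: algebra_simps)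
      moreover have "N * (z - B + push / 2) \<le> N * y" using lo wp key S_lo by (simp add: algebra_simps)
      ultimately have "y < z + \<epsilon>" "z - B + push / 2 \<le> y" using N3 by simp_all
      thus ?thesis by simp
    next
      case 3
      hence wp: "w = - push" using w push_pos by simp
      have "(z - mean x) * N < - (N - 1) * push" using 3 N3 by (simp add: field_simps)
      hence "N * (z - \<epsilon>) < N * y" using lo wp e1 S_mean by (simp add: algebra_simps)
      moreover have "N * y \<le> N * (z + B - push / 2)" using hi wp key S_hi by (simp add: algebra_simps)
      ultimately have "z - \<epsilon> < y" "y \<le> z + B - push / 2" using N3 by simp_all
      thus ?thesis by simp
    qed
  qed
  have "\<bar>x' i - z\<bar> \<le> max \<epsilon> (B - push / 2)" if i: "i < n" for i
  proof -
    obtain y where y: "x' i = proj01 y"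
      and "(\<Sum>j\<in>nbh x i. x j) + (real (card (nbh x i)) - 1) * (w - \<epsilon>) \<le> real (card (nbh x i)) * y"
      and "real (card (nbh x i)) * y \<le> (\<Sum>j\<in>nbh x i. x j) + (real (card (nbh x i)) - 1) * (w + \<epsilon>)"
      using next_state_bounds[OF step i] unfolding w_def by blast
    hence "S + (N - 1) * (w - \<epsilon>) \<le> N * y" "N * y \<le> S + (N - 1) * (w + \<epsilon>)"
      unfolding fully_connected_nbh[OF full i] by (simp_all add: S_def N_def)
    hence "\<bar>y - z\<bar> \<le> max \<epsilon> (B - push / 2)" using close by blast
    thus ?thesis using y abs_proj01_diff_le_unit[OF z_ge_0 z_le_1, of y] by linarith
  qed
  moreover have "fully_connected x'" unfolding fully_connected_def
  proof (intro allI impI)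
    fix i j assume "i < n" "j < n"
    hence "\<bar>x' i - x' j\<bar> \<le> 2 * \<epsilon>"
      using next_state_same_nbh_close[OF step] fully_connected_nbh[OF full] by metis
    thus "\<bar>x' i - x' j\<bar> \<le> r" using parameter_bounds(1,6) by linarith
  qed
  ultimately show ?thesis by blast
qed

definition "settle_time = nat \<lceil>2 / push\<rceil>"

lemma converging_phase:
  "leads_to settle_time (\<lambda>x. fully_connected x \<and> x \<in> unit_cube n)
     (\<lambda>x. x \<in> unit_cube n \<and> (\<forall>i<n. \<bar>x i - z\<bar> \<le> \<epsilon>))"
proof -
  define I where "I k x \<longleftrightarrow> fully_connected x \<and> x \<in> unit_cube n \<and>
    (\<forall>i<n. \<bar>x i - z\<bar> \<le> max \<epsilon> (1 - real k * (push / 2)))" for k x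
  have "leads_to settle_time (I 0) (\<lambda>x. x \<in> unit_cube n \<and> (\<forall>i<n. \<bar>x i - z\<bar> \<le> \<epsilon>))"
  proof (rule leads_to_by_progress)
    fix k x x' assume I: "I k x" and step: "next_state x x'"
    have "max \<epsilon> (max \<epsilon> (1 - real k * (push / 2)) - push / 2) \<le> max \<epsilon> (1 - real k * (push / 2) - push / 2)"
      using push_pos by (auto simp: max_def)
    also have "\<dots> = max \<epsilon> (1 - real (Suc k) * (push / 2))"
      by (rule arg_cong[where f = "max \<epsilon>"]) (simp add: algebra_simps)
    finally show "I (Suc k) x'"
      using fully_connected_step[OF _ step, of "max \<epsilon> (1 - real k * (push / 2))"] I
        next_state_unit_cube[OF step]
      by (force simp: I_def)
  next
    fix x assume "I settle_time x"
    moreover have "real settle_time \<ge> 2 / push" unfolding settle_time_def by linarith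
    hence "1 - real settle_time * (push / 2) \<le> 0" using push_pos by (simp add: field_simps)
    ultimately show "x \<in> unit_cube n \<and> (\<forall>i<n. \<bar>x i - z\<bar> \<le> \<epsilon>)"
      using parameter_bounds(1) by (simp add: I_def)
  qed
  moreover have "fully_connected x \<Longrightarrow> x \<in> unit_cube n \<Longrightarrow> I 0 x" for x
    using z_ge_0 z_le_1 by (force simp: I_def unit_cube_def abs_le_iff)
  ultimately show ?thesis by (rule leads_to_weaken) auto
qed

definition "total_time = K + sweep_time K n + settle_time"

lemma reaches_neighbourhood_of_z:
  "leads_to total_time (\<lambda>x. x \<in> unit_cube n) (\<lambda>x. x \<in> unit_cube n \<and> (\<forall>i<n. \<bar>x i - z\<bar> \<le> \<epsilon>))"
proof -
  have gap: "below_floor {} (\<lambda>_. 0) 0" by (simp add: below_floor_def)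
  have rise: "leads_to K (\<lambda>x. x \<in> unit_cube n) (sweep_ready {} (\<lambda>_. 0) 0 n)"
    by (rule leads_to_weaken[OF rising_phase[OF gap]])
       (use card_isolated_agents_diff_le[of _ "{}", unfolded Diff_empty] in
         \<open>auto simp: frozen_below_def unit_cube_def sweep_ready_def\<close>)
  have sweep: "leads_to (sweep_time K n) (sweep_ready {} (\<lambda>_. 0) 0 n) fully_connected"
    by (rule leads_to_weaken[OF sweep[OF gap]])
       (use K_ge isolated_agents_nonempty in \<open>auto simp: sweep_done_def\<close>)
  show ?thesis
    using leads_to_trans[OF leads_to_in_unit_cube[OF leads_to_trans[OF rise sweep]] converging_phase]
    by (simp add: total_time_def)
qed

lemma total_time_pos: "total_time > 0"
  using push_pos by (simp add: total_time_def settle_time_def)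

end

theorem lemma10:
  fixes n :: nat and rr \<eta> z \<alpha> :: real
  assumes "n \<ge> 3" and "\<eta> > 0"
    and "rr \<le> 1" and "rr \<ge> 1 / (real n - 1)"
    and "0 \<le> z" and "z \<le> 1" and "\<alpha> > 0"
  shows "robustly_reachable_C4 n (\<lambda>_. rr) \<eta>
           {x \<in> unit_cube n. (MAX i\<in>{..<n}. \<bar>x i - z\<bar>) < \<alpha>}"
proof -
  interpret c4_steering n rr \<eta> z \<alpha> by unfold_locales (use assms in auto)
  show ?thesis
  proof (rule robustly_reachable_C4_by_feedback[where f = "\<lambda>x _ _. feedback x"])
    show "- \<eta> + \<epsilon> \<le> feedback x \<and> feedback x \<le> \<eta> - \<epsilon>" for x
      using feedback_bounds[of x] parameter_bounds(9) by linarith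
    fix y assume "y 0 \<in> unit_cube n"
      and "\<And>t. t < total_time \<Longrightarrow> \<exists>b. (\<forall>i<n. \<forall>j<n. j \<noteq> i \<longrightarrow> \<bar>b j i\<bar> \<le> \<epsilon>) \<and>
                 y (Suc t) = c4_step n (\<lambda>_. rr) (y t) (\<lambda>_ _. feedback (y t)) b"
    then obtain t where t: "t \<le> total_time" "y t \<in> unit_cube n" "\<forall>i<n. \<bar>y t i - z\<bar> \<le> \<epsilon>"
      using reaches_neighbourhood_of_z unfolding leads_to_def next_state_def by blast
    have "(MAX i\<in>{..<n}. \<bar>y t i - z\<bar>) < \<alpha>"
      using t(3) parameter_bounds(2) assms(1) by (subst Max_less_iff) (auto simp: lessThan_empty_iff)
    thus "\<exists>t\<le>total_time. y t \<in> {x \<in> unit_cube n. (MAX i\<in>{..<n}. \<bar>x i - z\<bar>) < \<alpha>}"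
      using t by blast
  qed (use total_time_pos parameter_bounds(1,9) push_pos in auto)
qed

end
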